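(* Let $0<\delta<1$, $t>1$, $\lambda_c:=1/(t^{1-\delta}-1)$, $\lambda_c\le\lambda\le t^{1-\delta}-1$, $0<k<t^{\delta-1}$, and let $\phi$ satisfy $0<\phi<\pi/2$ if $\ln\lambda\ge0$ and $0<\phi<\arctan(\pi/|\ln\lambda|)$ if $\ln\lambda<0$. When $z$ lies on the contour $\{z=1-k+R{\rm e}^{{\rm i}\phi}:0\le R<\infty\}$, the function $F(z;\lambda)$ has non-negative imaginary part.
   Context: $F(z;\lambda):=(1-z)\ln(1-z)+z\ln z+z\ln\lambda$, with branch cuts $(-\infty,0]$ and $[1,\infty)$. *)

theory Defs
  imports "HOL-Analysis.Analysis"
begin

definition F :: "complex \<Rightarrow> real \<Rightarrow> complex" where
  "F z lam = (1 - z) * Ln (1 - z) + z * Ln z + z * complex_of_real (ln lam)"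

end

theory Submission
  imports Defs "HOL-Real_Asymp.Real_Asymp"
begin

text \<open>
  Write \<open>z(x) = 1 - k + x u\<close> with \<open>u = e\<^sup>i\<^sup>\<phi>\<close>. Then \<open>Im F(z(0)) = 0\<close>, since \<open>z(0)\<close> is real
  in \<open>(0,1)\<close>, and \<open>d/dx Im F(z(x)) = g(x) := Im (u F'(z(x)))\<close> with
  \<open>F'(z) = Ln z - Ln (1 - z) + ln \<lambda>\<close>, so it suffices that \<open>g \<ge> 0\<close> on \<open>[0,\<infinity>)\<close>.
  Now \<open>g'(x) = Im (u\<^sup>2 / (z (1 - z)))\<close> has the sign of \<open>2k(1-k) cos \<phi> - (1-2k) x\<close>, so \<open>g\<close>
  first increases and then decreases; hence \<open>g\<close> is nonnegative as soon as it is at both ends: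
  \<open>g(0) = sin \<phi> \<cdot> ln (\<lambda>(1-k)/k)\<close>, which is \<open>\<ge> 0\<close> because \<open>k \<le> \<lambda>(1-k)\<close>, and
  \<open>g(\<infinity>) = sin \<phi> ln \<lambda> + \<pi> cos \<phi>\<close>, using \<open>Ln z - Ln (1 - z) \<rightarrow> i\<pi>\<close>; this is \<open>\<ge> 0\<close> exactly by the restriction on \<open>\<phi>\<close>.
\<close>

lemma nonneg_if_deriv_changes_sign_once:
  fixes g g' :: "real \<Rightarrow> real"
  assumes deriv: "\<And>x. 0 \<le> x \<Longrightarrow> (g has_real_derivative g' x) (at x)"
    and sign: "\<And>x y. 0 \<le> x \<Longrightarrow> x \<le> y \<Longrightarrow> g' x < 0 \<Longrightarrow> g' y \<le> 0"
    and "0 \<le> g 0" and lim: "(g \<longlongrightarrow> L) at_top" and "0 \<le> L" and "0 \<le> x"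
  shows "0 \<le> g x"
proof -
  have cont: "continuous_on {a..b} g" if "0 \<le> a" for a b
    using that by (intro continuous_at_imp_continuous_on ballI DERIV_isCont[OF deriv]) auto
  show ?thesis
  proof (cases "\<exists>y\<in>{0..x}. g' y < 0")
    case False
    have "g 0 \<le> g x"
    proof (rule DERIV_nonneg_imp_increasing_open[OF \<open>0 \<le> x\<close> _ cont[OF order_refl]])
      fix y :: real assume "0 < y" "y < x"
      then have "0 \<le> g' y"
        using False by (auto simp: not_less)
      then show "\<exists>d. (g has_real_derivative d) (at y) \<and> 0 \<le> d"
        using deriv[of y] \<open>0 < y\<close> by auto
    qed
    then show ?thesis using \<open>0 \<le> g 0\<close> by linarith
  next
    case True
    then obtain y where y: "0 \<le> y" "y \<le> x" "g' y < 0" by auto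
    have "g S \<le> g x" if "x \<le> S" for S
    proof (rule DERIV_nonpos_imp_decreasing_open[OF that _ cont[OF \<open>0 \<le> x\<close>]])
      fix w :: real assume "x < w" "w < S"
      then have "g' w \<le> 0"
        using sign[OF y(1) _ y(3), of w] y(2) by linarith
      then show "\<exists>d. (g has_real_derivative d) (at w) \<and> d \<le> 0"
        using deriv[of w] \<open>x < w\<close> \<open>0 \<le> x\<close> by auto
    qed
    then have "L \<le> g x"
      by (intro tendsto_upperbound[OF lim] eventually_mono[OF eventually_ge_at_top[of x]]) auto
    then show ?thesis using \<open>0 \<le> L\<close> by linarith
  qed
qed

lemma has_real_derivative_Im_along_line:
  fixes f :: "complex \<Rightarrow> complex"
  assumes "(f has_field_derivative f') (at (a + of_real x * u))"
  shows "((\<lambda>r. Im (f (a + of_real r * u))) has_real_derivative Im (u * f')) (at x)"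
proof -
  have "((\<lambda>r. a + r * u) has_field_derivative u) (at (of_real x))"
    by (auto intro!: derivative_eq_intros)
  then have "((\<lambda>r. f (a + r * u)) has_field_derivative f' * u) (at (of_real x))"
    using DERIV_chain2[of f f' "\<lambda>r. a + r * u"] assms by simp
  then have "((\<lambda>r. f (a + of_real r * u)) has_vector_derivative u * f') (at x)"
    by (subst mult.commute) (rule has_vector_derivative_real_field)
  then show ?thesis
    by (rule has_field_derivative_Im)
qed

definition F' :: "complex \<Rightarrow> real \<Rightarrow> complex" where
  "F' z lam = Ln z - Ln (1 - z) + of_real (ln lam)"

lemma F_has_field_derivative:
  assumes "w \<notin> \<real>\<^sub>\<le>\<^sub>0" "1 - w \<notin> \<real>\<^sub>\<le>\<^sub>0"
  shows "((\<lambda>z. F z lam) has_field_derivative F' w lam) (at w)"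
proof -
  have "w \<noteq> 0" "1 - w \<noteq> 0" using assms by auto
  then show ?thesis unfolding F_def F'_def
    by (auto intro!: derivative_eq_intros assms)
qed

lemma F'_has_field_derivative:
  assumes "w \<notin> \<real>\<^sub>\<le>\<^sub>0" "1 - w \<notin> \<real>\<^sub>\<le>\<^sub>0"
  shows "((\<lambda>z. F' z lam) has_field_derivative 1 / (w * (1 - w))) (at w)"
proof -
  have "w \<noteq> 0" "1 - w \<noteq> 0" using assms by auto
  then show ?thesis unfolding F'_def
    by (auto intro!: derivative_eq_intros assms simp: field_simps)
qed

lemma Im_square_div_mult_one_minus_neg_iff:
  fixes u :: complex and k x :: real
  assumes u: "norm u = 1" "0 < Im u"
  defines "z \<equiv> of_real (1 - k) + of_real x * u"
  assumes "z * (1 - z) \<noteq> 0"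
  shows "Im (u\<^sup>2 / (z * (1 - z))) < 0 \<longleftrightarrow> 2 * k * (1 - k) * Re u < (1 - 2 * k) * x"
proof -
  have "(Re u)\<^sup>2 + (Im u)\<^sup>2 = 1"
    using u(1) by (simp add: cmod_def)
  then have "Im (u\<^sup>2 * cnj (z * (1 - z))) = Im u * (2 * k * (1 - k) * Re u - (1 - 2 * k) * x)"
    unfolding z_def by (simp add: power2_eq_square algebra_simps) algebra
  moreover have "Im (u\<^sup>2 / (z * (1 - z))) = Im (u\<^sup>2 * cnj (z * (1 - z))) / (norm (z * (1 - z)))\<^sup>2"
    by (simp add: complex_div_cnj[of "u\<^sup>2"] norm_mult power_mult_distrib)
  moreover have "0 < (norm (z * (1 - z)))\<^sup>2"
    using assms(4) by simp
  ultimately show ?thesis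
    using u(2) by (simp add: divide_less_0_iff mult_less_0_iff)
qed

lemma Ln_sub_Ln_along_line_tendsto:
  fixes a b :: real and u :: complex
  assumes "0 < Im u"
  shows "((\<lambda>x. Ln (of_real a + of_real x * u) - Ln (of_real b - of_real x * u)) \<longlongrightarrow> \<i> * pi) at_top"
proof -
  have "u \<noteq> 0" using assms by auto
  have Ln_minus_u: "Ln u - Ln (- u) = \<i> * pi"
    using Ln_minus[OF \<open>u \<noteq> 0\<close>] assms by simp
  have "((\<lambda>x::real. a / x) \<longlongrightarrow> 0) at_top" "((\<lambda>x::real. b / x) \<longlongrightarrow> 0) at_top"
    by real_asymp+
  from tendsto_add[OF tendsto_of_real[OF this(1)] tendsto_const] tendsto_diff[OF tendsto_of_real[OF this(2)] tendsto_const]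
  have "((\<lambda>x. of_real (a / x) + u) \<longlongrightarrow> of_real 0 + u) at_top"
    "((\<lambda>x. of_real (b / x) - u) \<longlongrightarrow> of_real 0 - u) at_top" .
  moreover have "u \<notin> \<real>\<^sub>\<le>\<^sub>0" "- u \<notin> \<real>\<^sub>\<le>\<^sub>0"
    using assms by (auto simp: complex_nonpos_Reals_iff)
  ultimately have "((\<lambda>x. Ln (of_real (a / x) + u) - Ln (of_real (b / x) - u)) \<longlongrightarrow> Ln u - Ln (- u)) at_top"
    by (intro tendsto_diff isCont_tendsto_compose[OF continuous_at_Ln]) auto
  moreover have "eventually (\<lambda>x. Ln (of_real (a / x) + u) - Ln (of_real (b / x) - u)
      = Ln (of_real a + of_real x * u) - Ln (of_real b - of_real x * u)) at_top"
    using eventually_gt_at_top[of 0]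
  proof eventually_elim
    case (elim x)
    have "of_real a + of_real x * u \<noteq> 0" "of_real b - of_real x * u \<noteq> 0"
      using elim assms by (auto simp: complex_eq_iff)
    moreover have "of_real (a / x) + u = (of_real a + of_real x * u) / of_real x"
      "of_real (b / x) - u = (of_real b - of_real x * u) / of_real x"
      using elim by (simp_all add: field_simps)
    ultimately show ?case using elim by (simp add: Ln_divide_of_real)
  qed
  ultimately show ?thesis
    unfolding Ln_minus_u by (rule Lim_transform_eventually)
qed

lemma line_avoids_branch_cuts:
  fixes k x :: real and u :: complex
  assumes "0 < Im u" "0 < k" "k < 1" "0 \<le> x"
  shows "of_real (1 - k) + of_real x * u \<notin> \<real>\<^sub>\<le>\<^sub>0" "1 - (of_real (1 - k) + of_real x * u) \<notin> \<real>\<^sub>\<le>\<^sub>0"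
  using assms by (cases "x = 0"; auto simp: complex_nonpos_Reals_iff)+

lemma Im_F'_along_line_tendsto:
  fixes k lam :: real and u :: complex
  assumes "0 < Im u"
  shows "((\<lambda>x. Im (u * F' (of_real (1 - k) + of_real x * u) lam)) \<longlongrightarrow> Im u * ln lam + pi * Re u) at_top"
proof -
  have "((\<lambda>x. Im (u * (Ln (of_real (1 - k) + of_real x * u) - Ln (of_real k - of_real x * u)
      + of_real (ln lam)))) \<longlongrightarrow> Im (u * (\<i> * pi + of_real (ln lam)))) at_top"
    by (intro tendsto_intros Ln_sub_Ln_along_line_tendsto assms)
  then show ?thesis
    by (simp add: F'_def algebra_simps)
qed

lemma Im_F'_along_line_nonneg:
  fixes k lam x :: real and u :: complex
  assumes u: "norm u = 1" "0 < Im u"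
    and k: "0 < k" "2 * k \<le> 1"
    and lam: "0 < lam" "k \<le> lam * (1 - k)"
    and at_infinity: "0 \<le> Im u * ln lam + pi * Re u"
    and "0 \<le> x"
  shows "0 \<le> Im (u * F' (of_real (1 - k) + of_real x * u) lam)"
proof -
  define z where "z x = of_real (1 - k) + of_real x * u" for x :: real
  have off_cuts: "z x \<notin> \<real>\<^sub>\<le>\<^sub>0" "1 - z x \<notin> \<real>\<^sub>\<le>\<^sub>0" if "0 \<le> x" for x
    unfolding z_def using line_avoids_branch_cuts u(2) k that by auto
  define g' where "g' x = Im (u * (u * (1 / (z x * (1 - z x)))))" for x
  have deriv: "((\<lambda>x. Im (u * F' (z x) lam)) has_real_derivative g' x) (at x)" if "0 \<le> x" for x
    unfolding z_def g'_def
    by (rule has_real_derivative_Im_along_line DERIV_cmult F'_has_field_derivative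
        off_cuts[OF that, unfolded z_def])+
  have g'_neg_iff: "g' x < 0 \<longleftrightarrow> 2 * k * (1 - k) * Re u < (1 - 2 * k) * x" if "0 \<le> x" for x
  proof -
    have "z x * (1 - z x) \<noteq> 0"
      using off_cuts[OF that] by auto
    then show ?thesis
      using Im_square_div_mult_one_minus_neg_iff[OF u, of k x]
      by (simp add: g'_def z_def power2_eq_square)
  qed
  have at_0: "0 \<le> Im (u * F' (z 0) lam)"
  proof -
    have "ln k \<le> ln (lam * (1 - k))"
      using lam k by simp
    also have "\<dots> = ln lam + ln (1 - k)"
      using lam k by (simp add: ln_mult)
    finally have "ln k \<le> ln lam + ln (1 - k)" .
    moreover have "z 0 = of_real (1 - k)" "1 - z 0 = of_real k"
      by (simp_all add: z_def)
    ultimately show ?thesis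
      using k u(2) by (simp add: F'_def Ln_of_real del: of_real_diff)
  qed
  show ?thesis
    unfolding z_def[symmetric]
  proof (rule nonneg_if_deriv_changes_sign_once[OF deriv _ at_0 _ at_infinity \<open>0 \<le> x\<close>])
    fix x y :: real assume "0 \<le> x" "x \<le> y" "g' x < 0"
    then have "2 * k * (1 - k) * Re u < (1 - 2 * k) * x"
      using g'_neg_iff by blast
    moreover have "(1 - 2 * k) * x \<le> (1 - 2 * k) * y"
      using \<open>x \<le> y\<close> k by (intro mult_left_mono) auto
    moreover have "0 \<le> y"
      using \<open>0 \<le> x\<close> \<open>x \<le> y\<close> by linarith
    ultimately show "g' y \<le> 0"
      using g'_neg_iff[of y] by linarith
  next
    show "((\<lambda>x. Im (u * F' (z x) lam)) \<longlongrightarrow> Im u * ln lam + pi * Re u) at_top"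
      unfolding z_def by (rule Im_F'_along_line_tendsto[OF u(2)])
  qed
qed

lemma Im_F_along_line_nonneg:
  fixes k lam x :: real and u :: complex
  assumes u: "norm u = 1" "0 < Im u"
    and k: "0 < k" "2 * k \<le> 1"
    and lam: "0 < lam" "k \<le> lam * (1 - k)"
    and at_infinity: "0 \<le> Im u * ln lam + pi * Re u"
    and "0 \<le> x"
  shows "0 \<le> Im (F (of_real (1 - k) + of_real x * u) lam)"
proof -
  define h where "h x = Im (F (of_real (1 - k) + of_real x * u) lam)" for x
  have deriv: "(h has_real_derivative Im (u * F' (of_real (1 - k) + of_real y * u) lam)) (at y)"
    if "0 \<le> y" for y
    unfolding h_def
    using line_avoids_branch_cuts[OF u(2) k(1) _ that] k
    by (intro has_real_derivative_Im_along_line F_has_field_derivative) auto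
  have "h 0 \<le> h x"
  proof (rule DERIV_nonneg_imp_increasing_open[OF \<open>0 \<le> x\<close>])
    fix y :: real assume "0 < y" "y < x"
    then show "\<exists>d. (h has_real_derivative d) (at y) \<and> 0 \<le> d"
      using deriv Im_F'_along_line_nonneg[OF assms(1-7)] by (metis less_imp_le)
  next
    show "continuous_on {0..x} h"
      by (intro continuous_at_imp_continuous_on ballI DERIV_isCont[OF deriv]) auto
  qed
  moreover have "h 0 = 0"
  proof -
    have "1 - of_real (1 - k) = (of_real k :: complex)"
      by simp
    then show ?thesis
      using k by (simp add: h_def F_def Ln_of_real del: of_real_diff)
  qed
  ultimately show ?thesis
    by (simp add: h_def)
qed

lemma window_parameter_bounds:
  fixes T lam k :: real
  assumes T: "1 < T" and lam: "1 / (T - 1) \<le> lam" "lam \<le> T - 1" and k: "0 < k" "k < 1 / T"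
  shows "2 * k \<le> 1" "0 < lam" "k \<le> lam * (1 - k)"
proof -
  have "1 / (T - 1) \<le> T - 1"
    using lam by linarith
  then have "1 \<le> (T - 1) * (T - 1)"
    using T by (simp add: field_simps)
  have "2 \<le> T"
  proof (rule ccontr)
    assume "\<not> 2 \<le> T"
    then have "(T - 1) * (T - 1) < 1 * 1"
      using T by (intro mult_strict_mono) auto
    then show False
      using \<open>1 \<le> (T - 1) * (T - 1)\<close> by simp
  qed
  have "k * T < 1"
    using k T by (simp add: field_simps)
  moreover have "k * 2 \<le> k * T"
    using \<open>2 \<le> T\<close> k by (intro mult_left_mono) auto
  ultimately show "2 * k \<le> 1"
    by linarith
  have "0 < 1 / (T - 1)"
    using T by simp
  then show "0 < lam"
    using lam by linarith
  have "k < (1 - k) / (T - 1)"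
    using \<open>k * T < 1\<close> T by (simp add: field_simps)
  also have "\<dots> \<le> lam * (1 - k)"
    using mult_right_mono[OF lam(1), of "1 - k"] \<open>2 * k \<le> 1\<close> by simp
  finally show "k \<le> lam * (1 - k)" by simp
qed

lemma sin_mul_add_cos_nonneg_if_less_arctan:
  fixes L c \<phi> :: real
  assumes "L < 0" "0 < \<phi>" "\<phi> < arctan (c / \<bar>L\<bar>)"
  shows "0 \<le> sin \<phi> * L + c * cos \<phi>"
proof -
  have "\<phi> < pi / 2"
    using assms(3) arctan_ubound by (rule less_trans)
  then have "0 < cos \<phi>" "arctan (tan \<phi>) = \<phi>"
    using assms(2) by (auto intro: cos_gt_zero_pi arctan_tan)
  then have "tan \<phi> < c / \<bar>L\<bar>"
    using assms(3) by (metis arctan_less_iff)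
  then have "tan \<phi> < c / - L"
    using assms(1) by simp
  then have "sin \<phi> * - L < c * cos \<phi>"
    using assms(1) \<open>0 < cos \<phi>\<close> by (simp add: tan_def field_simps)
  then show ?thesis by simp
qed

theorem lemma4p5:
  fixes \<delta> t lam k \<phi> R :: real
  assumes "0 < \<delta>" "\<delta> < 1" "1 < t"
    and "1 / (t powr (1 - \<delta>) - 1) \<le> lam" "lam \<le> t powr (1 - \<delta>) - 1"
    and "0 < k" "k < t powr (\<delta> - 1)"
    and "ln lam \<ge> 0 \<Longrightarrow> 0 < \<phi> \<and> \<phi> < pi / 2"
    and "ln lam < 0 \<Longrightarrow> 0 < \<phi> \<and> \<phi> < arctan (pi / \<bar>ln lam\<bar>)"
    and "0 \<le> R"
  shows "Im (F (1 - complex_of_real k + complex_of_real R * exp (\<i> * complex_of_real \<phi>)) lam) \<ge> 0"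
proof -
  have T: "1 < t powr (1 - \<delta>)"
    using assms(2,3) by simp
  have "k < 1 / t powr (1 - \<delta>)"
    using assms(7) powr_minus_divide[of t "1 - \<delta>"] by simp
  from window_parameter_bounds[OF T assms(4,5,6) this]
  have k: "2 * k \<le> 1" and lam: "0 < lam" "k \<le> lam * (1 - k)" by auto
  have \<phi>: "0 < \<phi>" "\<phi> < pi / 2"
    using assms(8,9) arctan_ubound[of "pi / \<bar>ln lam\<bar>"] by (cases "ln lam \<ge> 0"; fastforce)+
  have at_infinity: "0 \<le> sin \<phi> * ln lam + pi * cos \<phi>"
  proof (cases "ln lam \<ge> 0")
    case True
    then show ?thesis
      using \<phi> by (auto intro!: add_nonneg_nonneg mult_nonneg_nonneg sin_ge_zero cos_ge_zero)
  next
    case False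
    then show ?thesis
      using assms(9) by (intro sin_mul_add_cos_nonneg_if_less_arctan) auto
  qed
  have "0 < Im (exp (\<i> * of_real \<phi>))"
    using \<phi> by (simp add: Im_exp sin_gt_zero)
  from Im_F_along_line_nonneg[OF _ this assms(6) k lam, of R]
  show ?thesis
    using at_infinity assms(10) by (simp add: Re_exp Im_exp)
qed

end
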